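(* Let $G$ be a triangle-free $2$-degenerate graph on $n\ge1$ vertices. Then $\sqrt[n]{\tilde b(G)}\le\Gamma_2$, where $\Gamma_2\approx1.2207$ is the unique root in $[1,2]$ of $x^4-x-1=0$.
   Context: A graph is $2$-degenerate if every induced subgraph has a vertex of degree at most $2$. $\mathrm{Ind}(G)$ is the independence complex of $G$ (including the empty face), and $\tilde b(G)=\sum_{i\ge-1}\dim_{\mathbb{K}}\widetilde H_i(\mathrm{Ind}(G);\mathbb{K})$ for a fixed field $\mathbb{K}$. *)

theory Defs
  imports Complex_Main "HOL-Library.Function_Algebras"
begin

text \<open>Simple graph on a finite vertex set V with symmetric irreflexive adjacency E.\<close>

definition triangle_free :: "'a set \<Rightarrow> ('a \<Rightarrow> 'a \<Rightarrow> bool) \<Rightarrow> bool" where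
  "triangle_free V E \<longleftrightarrow>
     \<not> (\<exists>x\<in>V. \<exists>y\<in>V. \<exists>z\<in>V. E x y \<and> E y z \<and> E x z)"

definition two_degenerate :: "'a set \<Rightarrow> ('a \<Rightarrow> 'a \<Rightarrow> bool) \<Rightarrow> bool" where
  "two_degenerate V E \<longleftrightarrow>
     (\<forall>S. S \<subseteq> V \<and> S \<noteq> {} \<longrightarrow> (\<exists>v\<in>S. card {u\<in>S. E v u} \<le> 2))"

definition ind_face :: "'a set \<Rightarrow> ('a \<Rightarrow> 'a \<Rightarrow> bool) \<Rightarrow> 'a set \<Rightarrow> bool" where
  "ind_face V E \<sigma> \<longleftrightarrow> \<sigma> \<subseteq> V \<and> (\<forall>x\<in>\<sigma>. \<forall>y\<in>\<sigma>. \<not> E x y)"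

text \<open>Simplicial chains with coefficients in the field 'k, supported on faces with
  exactly j vertices (i.e. of dimension j-1); j = 0 is the empty face (augmentation).\<close>
definition chains :: "'k itself \<Rightarrow> 'a set \<Rightarrow> ('a \<Rightarrow> 'a \<Rightarrow> bool) \<Rightarrow> nat \<Rightarrow> ('a set \<Rightarrow> 'k::field) set" where
  "chains _ V E j = {c. \<forall>\<sigma>. c \<sigma> \<noteq> 0 \<longrightarrow> ind_face V E \<sigma> \<and> card \<sigma> = j}"

text \<open>Simplicial boundary map (orientation from the linear order on vertices):
  the coefficient of face \<tau> in the boundary of c.\<close>
definition bdry :: "'a set \<Rightarrow> ('a set \<Rightarrow> 'k::field) \<Rightarrow> ('a::linorder) set \<Rightarrow> 'k" where
  "bdry V c \<tau> = (\<Sum>v\<in>V - \<tau>. (-1) ^ card {u\<in>\<tau>. u < v} * c (insert v \<tau>))"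

definition kscale :: "'k::field \<Rightarrow> ('a set \<Rightarrow> 'k) \<Rightarrow> ('a set \<Rightarrow> 'k)" where
  "kscale a c = (\<lambda>\<sigma>. a * c \<sigma>)"

text \<open>Dimension of the reduced homology in degree j-1:
  dim (ker \<partial>_j) - dim (im \<partial>_{j+1}) (the image is contained in the kernel).\<close>
definition red_betti :: "'k::field itself \<Rightarrow> ('a::linorder) set \<Rightarrow> ('a \<Rightarrow> 'a \<Rightarrow> bool) \<Rightarrow> nat \<Rightarrow> nat" where
  "red_betti K V E j =
     vector_space.dim (kscale :: 'k \<Rightarrow> _ \<Rightarrow> 'a set \<Rightarrow> 'k)
        {c \<in> chains K V E j. bdry V c = 0}
   - vector_space.dim (kscale :: 'k \<Rightarrow> _) (bdry V ` chains K V E (Suc j))"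

text \<open>Total reduced Betti number over 'k: sum over all degrees -1 .. |V|-1.\<close>
definition total_betti :: "'k::field itself \<Rightarrow> ('a::linorder) set \<Rightarrow> ('a \<Rightarrow> 'a \<Rightarrow> bool) \<Rightarrow> nat" where
  "total_betti K V E = (\<Sum>j\<in>{0..card V}. red_betti K V E j)"

end

theory Submission
  imports Defs "HOL-Library.Indicator_Function"
begin

text \<open>Adding a vertex \<open>x\<close> to faces (with the orientation sign) is a chain homotopy
  \<open>\<partial>K + K\<partial> = id\<close> on the chains of \<open>Ind(G)\<close>. Hence \<open>Ind(G)\<close> is acyclic if \<open>x\<close> is isolated, and
  splitting chains into those avoiding \<open>x\<close> and cones over chains of \<open>Ind(G - N[x])\<close> gives
  \<open>b(G) \<le> b(G - x) + b(G - N[x])\<close>. An isolated vertex gives \<open>b(G) = 0\<close>;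
  a leaf with neighbour \<open>u\<close> gives \<open>b(G) \<le> b(G - N[u])\<close>. Otherwise 2-degeneracy yields a vertex
  of degree 2 whose neighbours \<open>u\<close>, \<open>w\<close> are non-adjacent (triangle-freeness) and of degree at
  least 2, and splitting at \<open>u\<close> and then at \<open>w\<close> gives
  \<open>b(G) \<le> b(G - N[u]) + b(G - u - N[w]) \<le> \<Gamma>^(n-3) + \<Gamma>^(n-4) = \<Gamma>^n\<close>, using \<open>\<Gamma>^4 = \<Gamma> + 1\<close>.\<close>

definition (in vector_space) finite_dim :: "'b set \<Rightarrow> bool" where
  "finite_dim S \<longleftrightarrow> (\<exists>F. finite F \<and> S \<subseteq> span F)"

context vector_space begin

lemma finite_dim_obtain_basis:
  assumes "finite_dim S"
  obtains B where "B \<subseteq> S" "independent B" "S \<subseteq> span B" "card B = dim S" "finite B"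
proof -
  obtain F where F: "finite F" "S \<subseteq> span F" using assms by (auto simp: finite_dim_def)
  obtain B where B: "B \<subseteq> S" "independent B" "S \<subseteq> span B" "card B = dim S"
    using basis_exists by blast
  have "finite B" using independent_span_bound[OF F(1) B(2)] B(1) F(2) by blast
  with B that show ?thesis by blast
qed

lemma finite_dim_subset: "S \<subseteq> T \<Longrightarrow> finite_dim T \<Longrightarrow> finite_dim S"
  unfolding finite_dim_def by blast

lemma finite_dim_image:
  assumes "finite_dim S" "module_hom scale scale f"
  shows "finite_dim (f ` S)"
proof -
  obtain F where "finite F" "S \<subseteq> span F" using assms(1) unfolding finite_dim_def by blast
  hence "finite (f ` F)" "f ` S \<subseteq> span (f ` F)"
    using module_hom.spans_image[OF assms(2)] by auto
  thus ?thesis unfolding finite_dim_def by blast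
qed

lemma dim_subset_finite_dim:
  assumes "S \<subseteq> T" "finite_dim T"
  shows "dim S \<le> dim T"
proof -
  obtain B where B: "B \<subseteq> T" "independent B" "T \<subseteq> span B" "card B = dim T" "finite B"
    by (rule finite_dim_obtain_basis[OF assms(2)])
  have "S \<subseteq> span B" using assms(1) B(3) by blast
  from dim_le_card[OF this B(5)] show ?thesis using B(4) by simp
qed

lemma rank_nullity_finite_dim:
  assumes S: "subspace S" "finite_dim S" and f: "module_hom scale scale f"
  shows "dim S = dim {x\<in>S. f x = 0} + dim (f ` S)"
proof -
  interpret f: module_hom scale scale f by fact
  let ?K = "{x\<in>S. f x = 0}"
  have subK: "subspace ?K"
    using subspace_inter[OF S(1) f.subspace_kernel] by (simp add: Int_def conj_commute)
  have "finite_dim ?K" using finite_dim_subset[OF _ S(2), of ?K] by blast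
  then obtain B0 where B0: "B0 \<subseteq> ?K" "independent B0" "?K \<subseteq> span B0" "card B0 = dim ?K" "finite B0"
    by (rule finite_dim_obtain_basis)
  have "dim ?K + dim (f ` S) \<le> dim S"
  proof -
    obtain B where B: "B0 \<subseteq> B" "B \<subseteq> S" "independent B" "S \<subseteq> span B"
      using maximal_independent_subset_extend[of B0 S] B0 by blast
    obtain F where F: "finite F" "S \<subseteq> span F" using S(2) by (auto simp: finite_dim_def)
    have fB: "finite B" using independent_span_bound[OF F(1) B(3)] B(2) F(2) by blast
    have cB: "card B = dim S" using basis_card_eq_dim[OF B(2) B(4) B(3)] .
    have "f ` S \<subseteq> span (f ` B)" using f.spans_image[OF B(4)] .
    also have "f ` B \<subseteq> insert 0 (f ` (B - B0))" using B0(1) by auto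
    hence "span (f ` B) \<subseteq> span (f ` (B - B0))"
      by (metis span_insert_0 span_mono)
    finally have "dim (f ` S) \<le> card (f ` (B - B0))"
      using dim_le_card fB by blast
    also have "\<dots> \<le> card (B - B0)" using fB by (simp add: card_image_le)
    also have "\<dots> = card B - card B0" using B(1) fB by (meson card_Diff_subset finite_subset)
    finally show ?thesis using cB B0(4) card_mono[OF fB B(1)] by linarith
  qed
  moreover have "dim S \<le> dim ?K + dim (f ` S)"
  proof -
    obtain C where C: "C \<subseteq> f ` S" "independent C" "f ` S \<subseteq> span C" "card C = dim (f ` S)" "finite C"
      by (rule finite_dim_obtain_basis[OF finite_dim_image[OF S(2) f]])
    have "\<forall>c\<in>C. \<exists>y\<in>S. f y = c" using C(1) by blast
    then obtain p where p: "\<And>c. c \<in> C \<Longrightarrow> p c \<in> S \<and> f (p c) = c" by metis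
    let ?P = "p ` C"
    have fP: "f ` ?P = C" using p by (force simp: image_image)
    have "?P \<subseteq> S" using p by auto
    hence spPS: "span ?P \<subseteq> S" using span_minimal[OF _ S(1)] by blast
    have "S \<subseteq> span (B0 \<union> ?P)"
    proof
      fix x assume x: "x \<in> S"
      have "f x \<in> span C" using C(3) x by blast
      hence "f x \<in> f ` span ?P" using f.span_image fP by metis
      then obtain y where y: "y \<in> span ?P" "f y = f x" by auto
      have "x - y \<in> ?K" using x y spPS S(1) by (auto simp: f.diff subspace_diff)
      hence "x - y \<in> span (B0 \<union> ?P)" using B0(3) span_mono[of B0 "B0 \<union> ?P"] by blast
      moreover have "y \<in> span (B0 \<union> ?P)" using y(1) span_mono[of ?P "B0 \<union> ?P"] by blast
      ultimately have "(x - y) + y \<in> span (B0 \<union> ?P)" by (rule span_add)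
      thus "x \<in> span (B0 \<union> ?P)" by simp
    qed
    hence "dim S \<le> card (B0 \<union> ?P)" using dim_le_card B0(5) C(5) by blast
    also have "\<dots> \<le> card B0 + card ?P" by (rule card_Un_le)
    also have "\<dots> \<le> card B0 + card C" using card_image_le[OF C(5)] by simp
    finally show ?thesis using B0(4) C(4) by simp
  qed
  ultimately show ?thesis by linarith
qed

end

interpretation ks: vector_space "kscale :: 'k::field \<Rightarrow> ('b set \<Rightarrow> 'k) \<Rightarrow> ('b set \<Rightarrow> 'k)"
  by unfold_locales (auto simp: kscale_def fun_eq_iff algebra_simps)

lemma sum_fun_apply: "(sum f A) x = (\<Sum>a\<in>A. f a x)"
  by (induct A rule: infinite_finite_induct) auto

definition faces :: "'a set \<Rightarrow> ('a \<Rightarrow> 'a \<Rightarrow> bool) \<Rightarrow> nat \<Rightarrow> 'a set set" where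
  "faces V E j = {\<sigma>. ind_face V E \<sigma> \<and> card \<sigma> = j}"

lemma finite_faces: "finite V \<Longrightarrow> finite (faces V E j)"
  by (rule finite_subset[of _ "Pow V"]) (auto simp: faces_def ind_face_def)

lemma faces_empty_if_card_less: "finite V \<Longrightarrow> card V < j \<Longrightarrow> faces V E j = {}"
  by (auto simp: faces_def ind_face_def dest: card_mono)

lemma chains_subset_span_faces:
  fixes K :: "'k::field itself"
  assumes "finite V"
  shows "chains K V E j \<subseteq> ks.span ((\<lambda>\<sigma>. indicator {\<sigma>} :: _ \<Rightarrow> 'k) ` faces V E j)"
proof
  fix c :: "'a set \<Rightarrow> 'k" assume c: "c \<in> chains K V E j"
  have "c \<tau> = (\<Sum>\<sigma>\<in>faces V E j. kscale (c \<sigma>) (indicator {\<sigma>})) \<tau>" for \<tau>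
  proof -
    have "(\<Sum>\<sigma>\<in>faces V E j. kscale (c \<sigma>) (indicator {\<sigma>})) \<tau> =
        (\<Sum>\<sigma>\<in>faces V E j. if \<tau> = \<sigma> then c \<tau> else 0)"
      by (auto simp: sum_fun_apply kscale_def indicator_def intro: sum.cong)
    also have "\<dots> = c \<tau>"
      using c finite_faces[OF assms] by (auto simp: chains_def faces_def)
    finally show ?thesis by simp
  qed
  hence "c = (\<Sum>\<sigma>\<in>faces V E j. kscale (c \<sigma>) (indicator {\<sigma>}))" by blast
  also have "\<dots> \<in> ks.span ((\<lambda>\<sigma>. indicator {\<sigma>}) ` faces V E j)"
    by (intro ks.span_sum ks.span_scale ks.span_base) auto
  finally show "c \<in> ks.span ((\<lambda>\<sigma>. indicator {\<sigma>}) ` faces V E j)" .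
qed

lemma chains_finite_dim:
  fixes K :: "'k::field itself"
  assumes "finite V"
  shows "ks.finite_dim (chains K V E j)"
proof -
  have "finite ((\<lambda>\<sigma>. indicator {\<sigma>} :: _ \<Rightarrow> 'k) ` faces V E j)"
    using finite_faces[OF assms] by simp
  with chains_subset_span_faces[OF assms] show ?thesis
    unfolding ks.finite_dim_def by blast
qed

lemma chains_subspace: "ks.subspace (chains K V E j)"
  unfolding ks.subspace_def chains_def kscale_def
  by (auto, metis add.left_neutral add.right_neutral, metis add.left_neutral add.right_neutral)

lemma chains_mono: "W \<subseteq> V \<Longrightarrow> chains K W E j \<subseteq> chains K V E j"
  unfolding chains_def ind_face_def by blast

lemma chains_support_subset: "c \<in> chains K V E j \<Longrightarrow> c \<sigma> \<noteq> 0 \<Longrightarrow> \<sigma> \<subseteq> V"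
  by (auto simp: chains_def ind_face_def)

lemma bdry_linear: "module_hom kscale kscale (bdry V)"
proof -
  have "bdry V (c + d) = bdry V c + bdry V d" for c d :: "_ \<Rightarrow> 'k::field"
    unfolding bdry_def fun_eq_iff plus_fun_apply by (simp add: sum.distrib distrib_left)
  moreover have "bdry V (kscale a c) = kscale a (bdry V c)" for a and c :: "_ \<Rightarrow> 'k::field"
    unfolding bdry_def kscale_def fun_eq_iff by (simp add: sum_distrib_left mult.left_commute)
  ultimately show ?thesis
    unfolding module_hom_iff using ks.module_axioms by blast
qed

lemma bdry_eq_if_support_subset:
  assumes "finite V" "W \<subseteq> V" "\<And>\<sigma>. c \<sigma> \<noteq> 0 \<Longrightarrow> \<sigma> \<subseteq> W"
  shows "bdry V c = bdry W c"
  unfolding bdry_def fun_eq_iff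
  by (intro allI sum.mono_neutral_right) (use assms in auto)

lemma boundaries_finite_dim: "finite V \<Longrightarrow> ks.finite_dim (bdry W ` chains K V E j)"
  by (rule ks.finite_dim_image[OF chains_finite_dim bdry_linear])

lemma red_betti_eq_rank:
  fixes K :: "'k::field itself"
  assumes "finite V"
  shows "red_betti K V E j =
     (ks.dim (chains K V E j) - ks.dim (bdry V ` chains K V E j)) - ks.dim (bdry V ` chains K V E (Suc j))"
  using ks.rank_nullity_finite_dim[OF chains_subspace chains_finite_dim[OF assms] bdry_linear,
      of K E j V]
  unfolding red_betti_def by simp

lemma red_betti_le_card_faces:
  fixes K :: "'k::field itself"
  assumes "finite V"
  shows "red_betti K V E j \<le> card (faces V E j)"
proof -
  have "ks.dim (chains K V E j) \<le> card ((\<lambda>\<sigma>. indicator {\<sigma>} :: _ \<Rightarrow> 'k) ` faces V E j)"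
    using ks.dim_le_card[OF chains_subset_span_faces[OF assms]] finite_faces[OF assms] by blast
  also have "\<dots> \<le> card (faces V E j)" using card_image_le[OF finite_faces[OF assms]] .
  finally show ?thesis unfolding red_betti_eq_rank[OF assms] by linarith
qed

lemma total_betti_eq_sum_lessThan:
  assumes "finite V" "card V < M"
  shows "total_betti K V E = (\<Sum>j<M. red_betti K V E j)"
proof -
  have "total_betti K V E = (\<Sum>j<Suc (card V). red_betti K V E j)"
    unfolding total_betti_def by (rule sum.cong) auto
  also have "\<dots> = (\<Sum>j<M. red_betti K V E j)"
  proof (rule sum.mono_neutral_left)
    show "\<forall>i\<in>{..<M} - {..<Suc (card V)}. red_betti K V E i = 0"
      using red_betti_le_card_faces[OF assms(1)] faces_empty_if_card_less[OF assms(1)]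
      by (metis Diff_iff card.empty le_zero_eq lessThan_iff not_less_eq)
  qed (use assms in auto)
  finally show ?thesis .
qed

lemma total_betti_empty_le_1: "total_betti K {} E \<le> 1"
proof -
  have "faces {} E 0 = {{}}" by (auto simp: faces_def ind_face_def)
  hence "red_betti K {} E 0 \<le> 1" using red_betti_le_card_faces[of "{}" K E 0] by simp
  thus ?thesis unfolding total_betti_def by simp
qed

definition ins_sign :: "'a::linorder \<Rightarrow> 'a set \<Rightarrow> 'k::field" where
  "ins_sign x \<sigma> = (-1) ^ card {u\<in>\<sigma>. u < x}"

definition cone :: "'a::linorder \<Rightarrow> ('a set \<Rightarrow> 'k::field) \<Rightarrow> 'a set \<Rightarrow> 'k" where
  "cone x c = (\<lambda>\<sigma>. if x \<in> \<sigma> then ins_sign x \<sigma> * c (\<sigma> - {x}) else 0)"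

definition contract :: "'a::linorder \<Rightarrow> ('a set \<Rightarrow> 'k::field) \<Rightarrow> 'a set \<Rightarrow> 'k" where
  "contract x e = (\<lambda>\<rho>. if x \<notin> \<rho> then ins_sign x (insert x \<rho>) * e (insert x \<rho>) else 0)"

lemma bdry_ins_sign: "bdry V c \<tau> = (\<Sum>v\<in>V - \<tau>. ins_sign v \<tau> * c (insert v \<tau>))"
  unfolding bdry_def ins_sign_def ..

lemma ins_sign_square [simp]: "ins_sign x \<sigma> * ins_sign x \<sigma> = (1 :: 'k::field)"
  by (simp add: ins_sign_def power_mult_distrib[symmetric])

lemma ins_sign_square_mult [simp]: "ins_sign x \<sigma> * (ins_sign x \<sigma> * a) = (a :: 'k::field)"
  by (simp add: mult.assoc[symmetric])

lemma ins_sign_insert_self: "ins_sign x (insert x \<sigma>) = ins_sign x \<sigma>"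
  unfolding ins_sign_def by (rule arg_cong[where f="\<lambda>S. (-1) ^ card S"]) auto

lemma ins_sign_insert_swap:
  assumes "finite \<rho>" "x \<notin> \<rho>" "v \<notin> \<rho>" "x \<noteq> v"
  shows "ins_sign v (insert x \<rho>) * ins_sign x (insert v \<rho>) = - (ins_sign x \<rho> * ins_sign v \<rho> :: 'k::field)"
proof -
  have card_ins: "card {u\<in>insert a \<rho>. u < b} = card {u\<in>\<rho>. u < b} + (if a < b then 1 else 0)"
    if "a \<notin> \<rho>" for a b
  proof -
    have "{u\<in>insert a \<rho>. u < b} = (if a < b then insert a {u\<in>\<rho>. u < b} else {u\<in>\<rho>. u < b})"
      by auto
    thus ?thesis using assms(1) that by simp
  qed
  have "x < v \<or> v < x" using assms(4) by auto
  thus ?thesis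
    unfolding ins_sign_def card_ins[OF assms(2)] card_ins[OF assms(3)]
    by (elim disjE) (auto simp: power_add)
qed

lemma cone_linear: "module_hom kscale kscale (cone x)"
  unfolding module_hom_iff
  by (auto simp: ks.module_axioms cone_def kscale_def fun_eq_iff algebra_simps)

lemma contract_linear: "module_hom kscale kscale (contract x)"
  unfolding module_hom_iff
  by (auto simp: ks.module_axioms contract_def kscale_def fun_eq_iff algebra_simps)

lemma contract_cone: "contract x (cone x e) = (\<lambda>\<rho>. if x \<notin> \<rho> then e \<rho> else 0)"
  by (auto simp: fun_eq_iff contract_def cone_def mult.assoc[symmetric])

lemma cone_contract: "cone x (contract x c) = (\<lambda>\<sigma>. if x \<in> \<sigma> then c \<sigma> else 0)"
  by (auto simp: fun_eq_iff contract_def cone_def mult.assoc[symmetric] ins_sign_insert_self insert_absorb)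

lemma bdry_cone_add_cone_bdry_notin:
  assumes "finite V" "x \<in> V" "x \<notin> \<tau>"
  shows "bdry V (cone x c) \<tau> + cone x (bdry V c) \<tau> = (c \<tau> :: 'k::field)"
proof -
  have "bdry V (cone x c) \<tau> = (\<Sum>v\<in>V - \<tau>. if v = x then ins_sign x \<tau> * (ins_sign x (insert x \<tau>) * c \<tau>) else 0)"
    unfolding bdry_ins_sign by (rule sum.cong) (use assms in \<open>auto simp: cone_def\<close>)
  also have "\<dots> = c \<tau>"
    using assms by (simp add: sum.delta' ins_sign_insert_self mult.assoc[symmetric])
  finally show ?thesis using assms by (simp add: cone_def)
qed

lemma bdry_cone_add_cone_bdry_insert:
  assumes "finite V" "x \<in> V" "x \<notin> \<rho>" and fin: "\<And>\<sigma>. c \<sigma> \<noteq> 0 \<Longrightarrow> finite \<sigma>"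
  shows "bdry V (cone x c) (insert x \<rho>) + cone x (bdry V c) (insert x \<rho>) = (c (insert x \<rho>) :: 'k::field)"
proof -
  let ?\<tau> = "insert x \<rho>"
  have "cone x (bdry V c) ?\<tau> = ins_sign x \<rho> * bdry V c \<rho>"
    using assms(3) by (simp add: cone_def ins_sign_insert_self)
  also have "bdry V c \<rho> = ins_sign x \<rho> * c ?\<tau> + (\<Sum>v\<in>V - ?\<tau>. ins_sign v \<rho> * c (insert v \<rho>))"
  proof -
    have split: "V - \<rho> = insert x (V - ?\<tau>)" using assms(2,3) by auto
    have "bdry V c \<rho> = (\<Sum>v\<in>insert x (V - ?\<tau>). ins_sign v \<rho> * c (insert v \<rho>))"
      unfolding bdry_ins_sign split ..
    also have "\<dots> = ins_sign x \<rho> * c ?\<tau> + (\<Sum>v\<in>V - ?\<tau>. ins_sign v \<rho> * c (insert v \<rho>))"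
      by (rule sum.insert) (use assms(1) in auto)
    finally show ?thesis .
  qed
  also have "ins_sign x \<rho> * (ins_sign x \<rho> * c ?\<tau> + (\<Sum>v\<in>V - ?\<tau>. ins_sign v \<rho> * c (insert v \<rho>))) =
      c ?\<tau> + (\<Sum>v\<in>V - ?\<tau>. ins_sign x \<rho> * ins_sign v \<rho> * c (insert v \<rho>))"
    by (simp add: distrib_left sum_distrib_left mult.assoc)
  finally have cone_bdry: "cone x (bdry V c) ?\<tau> =
      c ?\<tau> + (\<Sum>v\<in>V - ?\<tau>. ins_sign x \<rho> * ins_sign v \<rho> * c (insert v \<rho>))" .
  have "bdry V (cone x c) ?\<tau> = (\<Sum>v\<in>V - ?\<tau>. ins_sign v ?\<tau> * cone x c (insert v ?\<tau>))"
    by (rule bdry_ins_sign)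
  also have "\<dots> = (\<Sum>v\<in>V - ?\<tau>. ins_sign v ?\<tau> * ins_sign x (insert v \<rho>) * c (insert v \<rho>))"
  proof (rule sum.cong)
    fix v assume "v \<in> V - ?\<tau>"
    hence "insert v ?\<tau> - {x} = insert v \<rho>" using assms(3) by auto
    moreover have "ins_sign x (insert v ?\<tau>) = (ins_sign x (insert v \<rho>) :: 'k)"
      by (metis insert_commute ins_sign_insert_self)
    ultimately
    show "ins_sign v ?\<tau> * cone x c (insert v ?\<tau>) = ins_sign v ?\<tau> * ins_sign x (insert v \<rho>) * c (insert v \<rho>)"
      by (simp add: cone_def)
  qed simp
  finally have bdry_cone: "bdry V (cone x c) ?\<tau> =
      (\<Sum>v\<in>V - ?\<tau>. ins_sign v ?\<tau> * ins_sign x (insert v \<rho>) * c (insert v \<rho>))" .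
  have "ins_sign v ?\<tau> * ins_sign x (insert v \<rho>) * c (insert v \<rho>)
      + ins_sign x \<rho> * ins_sign v \<rho> * c (insert v \<rho>) = 0" if v: "v \<in> V - ?\<tau>" for v
  proof (cases "finite \<rho>")
    case True
    have "ins_sign v ?\<tau> * ins_sign x (insert v \<rho>) = - (ins_sign x \<rho> * ins_sign v \<rho> :: 'k)"
      using ins_sign_insert_swap[OF True assms(3), of v] v by auto
    thus ?thesis by simp
  next
    case False
    hence "c (insert v \<rho>) = 0" using fin by (metis finite_insert)
    thus ?thesis by simp
  qed
  thus ?thesis
    unfolding cone_bdry bdry_cone
    by (simp add: add.assoc[symmetric] sum.distrib[symmetric] add.commute[of _ "c ?\<tau>"])
qed

lemma bdry_cone_add_cone_bdry:
  assumes "finite V" "x \<in> V" "\<And>\<sigma>. c \<sigma> \<noteq> 0 \<Longrightarrow> finite \<sigma>"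
  shows "bdry V (cone x c) + cone x (bdry V c) = (c :: 'a::linorder set \<Rightarrow> 'k::field)"
proof
  fix \<tau>
  show "(bdry V (cone x c) + cone x (bdry V c)) \<tau> = c \<tau>"
  proof (cases "x \<in> \<tau>")
    case True
    then obtain \<rho> where "\<tau> = insert x \<rho>" "x \<notin> \<rho>" by (meson mk_disjoint_insert)
    thus ?thesis using bdry_cone_add_cone_bdry_insert[OF assms(1,2) _ assms(3)] by simp
  qed (simp add: bdry_cone_add_cone_bdry_notin[OF assms(1,2)])
qed

lemma cone_in_chains:
  assumes "finite V" "x \<in> V" "c \<in> chains K V E j"
    and sym: "\<And>a b. E a b \<Longrightarrow> E b a" and irr: "\<And>a. \<not> E a a"
    and avoid: "\<And>\<sigma> y. c \<sigma> \<noteq> 0 \<Longrightarrow> x \<notin> \<sigma> \<Longrightarrow> y \<in> \<sigma> \<Longrightarrow> \<not> E x y"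
  shows "cone x c \<in> chains K V E (Suc j)"
  unfolding chains_def
proof (intro CollectI allI impI)
  fix \<sigma> assume "cone x c \<sigma> \<noteq> 0"
  hence x\<sigma>: "x \<in> \<sigma>" and nz: "c (\<sigma> - {x}) \<noteq> 0" by (auto simp: cone_def split: if_splits)
  hence face: "ind_face V E (\<sigma> - {x})" and card: "card (\<sigma> - {x}) = j"
    using assms(3) by (auto simp: chains_def)
  have no_nbr: "\<not> E x y" "\<not> E y x" if "y \<in> \<sigma>" for y
    using avoid[OF nz, of y] that sym irr by (cases "y = x"; blast)+
  have "ind_face V E \<sigma>"
    using face x\<sigma> assms(2) no_nbr unfolding ind_face_def by (metis Diff_iff insert_Diff insert_subset singletonD)
  moreover have "card \<sigma> = Suc j"
    using card x\<sigma> face assms(1) by (metis card_Suc_Diff1 finite_subset ind_face_def finite_Diff2 finite_insert insert_Diff)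
  ultimately show "ind_face V E \<sigma> \<and> card \<sigma> = Suc j" by blast
qed

abbreviation closed_nbhd :: "('a \<Rightarrow> 'a \<Rightarrow> bool) \<Rightarrow> 'a \<Rightarrow> 'a set" where
  "closed_nbhd E x \<equiv> insert x {y. E x y}"

lemma chains_0:
  assumes "finite V"
  shows "chains K V E 0 = {c. \<forall>\<sigma>. c \<sigma> \<noteq> 0 \<longrightarrow> \<sigma> = {}}"
proof -
  have "ind_face V E \<sigma> \<and> card \<sigma> = 0 \<longleftrightarrow> \<sigma> = {}" for \<sigma>
    using assms by (auto simp: ind_face_def card_eq_0_iff dest: finite_subset)
  thus ?thesis by (simp add: chains_def)
qed

text \<open>\<open>V - {x}\<close> and \<open>V - closed_nbhd E x\<close> carry the deletion and the link of \<open>x\<close> in \<open>Ind(G)\<close>.\<close>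

context
  fixes K :: "'k::field itself" and V :: "'a::linorder set" and E :: "'a \<Rightarrow> 'a \<Rightarrow> bool" and x :: 'a
  assumes finV: "finite V" and xV: "x \<in> V"
    and sym: "\<And>a b. E a b \<Longrightarrow> E b a" and irr: "\<And>a. \<not> E a a"
begin

lemma contract_bdry_del: "c \<in> chains K (V - {x}) E j \<Longrightarrow> contract x (bdry V c) = 0"
  by (auto simp: fun_eq_iff contract_def bdry_def dest!: chains_support_subset intro!: sum.neutral)

lemma cone_link_in_chains:
  assumes "d \<in> chains K (V - closed_nbhd E x) E j"
  shows "cone x d \<in> chains K V E (Suc j)"
proof (rule cone_in_chains[OF finV xV _ sym irr])
  show "d \<in> chains K V E j" using chains_mono[of "V - closed_nbhd E x" V] assms by blast
  show "\<not> E x y" if "d \<sigma> \<noteq> 0" "y \<in> \<sigma>" for \<sigma> y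
    using chains_support_subset[OF assms that(1)] that(2) by blast
qed

lemma contract_in_link_chains:
  assumes "c \<in> chains K V E (Suc j)"
  shows "contract x c \<in> chains K (V - closed_nbhd E x) E j"
  unfolding chains_def
proof (intro CollectI allI impI)
  fix \<rho> assume "contract x c \<rho> \<noteq> 0"
  hence x\<rho>: "x \<notin> \<rho>" and nz: "c (insert x \<rho>) \<noteq> 0" by (auto simp: contract_def split: if_splits)
  hence face: "ind_face V E (insert x \<rho>)" "card (insert x \<rho>) = Suc j"
    using assms by (auto simp: chains_def)
  have "finite \<rho>" using face finV by (auto simp: ind_face_def intro: finite_subset)
  thus "ind_face (V - closed_nbhd E x) E \<rho> \<and> card \<rho> = j"
    using face x\<rho> unfolding ind_face_def by auto
qed

lemma contract_bdry_cone_link: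
  assumes d: "d \<in> chains K (V - closed_nbhd E x) E j"
  shows "contract x (bdry V (cone x d)) = - bdry (V - closed_nbhd E x) d"
proof -
  interpret contract: module_hom kscale kscale "contract x" by (rule contract_linear)
  have supp: "\<sigma> \<subseteq> V - closed_nbhd E x" if "d \<sigma> \<noteq> 0" for \<sigma>
    using chains_support_subset[OF d that] .
  have "bdry V (cone x d) + cone x (bdry V d) = d"
    by (rule bdry_cone_add_cone_bdry[OF finV xV]) (use supp finV in \<open>meson Diff_subset finite_subset\<close>)
  hence "contract x (bdry V (cone x d)) = contract x d - contract x (cone x (bdry V d))"
    by (metis add_diff_cancel contract.diff)
  also have "contract x d = 0"
    using supp by (auto simp: fun_eq_iff contract_def)
  also have "contract x (cone x (bdry V d)) = bdry (V - closed_nbhd E x) d"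
  proof -
    have "bdry V d = bdry (V - closed_nbhd E x) d"
      by (rule bdry_eq_if_support_subset[OF finV _ supp]) auto
    moreover have "d \<sigma> = 0" if "x \<in> \<sigma>" for \<sigma> using supp[of \<sigma>] that by blast
    ultimately show ?thesis
      unfolding contract_cone by (auto simp: fun_eq_iff bdry_def intro!: sum.neutral)
  qed
  finally show ?thesis by (simp add: fun_eq_iff)
qed

lemma dim_boundaries_ge_del_link:
  "ks.dim (bdry (V - {x}) ` chains K (V - {x}) E (Suc j))
     + ks.dim (bdry (V - closed_nbhd E x) ` chains K (V - closed_nbhd E x) E j)
   \<le> ks.dim (bdry V ` chains K V E (Suc j))"
proof -
  let ?B = "bdry V ` chains K V E (Suc j)"
  have fd: "ks.finite_dim ?B" by (rule boundaries_finite_dim[OF finV])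
  have "ks.dim ?B = ks.dim {y\<in>?B. contract x y = 0} + ks.dim (contract x ` ?B)"
    by (rule ks.rank_nullity_finite_dim[OF module_hom.subspace_image[OF bdry_linear chains_subspace]
          fd contract_linear])
  moreover have "ks.dim (bdry (V - {x}) ` chains K (V - {x}) E (Suc j)) \<le> ks.dim {y\<in>?B. contract x y = 0}"
  proof (rule ks.dim_subset_finite_dim)
    show "bdry (V - {x}) ` chains K (V - {x}) E (Suc j) \<subseteq> {y\<in>?B. contract x y = 0}"
    proof clarify
      fix c assume c: "c \<in> chains K (V - {x}) E (Suc j)"
      have "bdry (V - {x}) c = bdry V c"
        by (rule bdry_eq_if_support_subset[OF finV, symmetric]) (auto dest: chains_support_subset[OF c])
      thus "bdry (V - {x}) c \<in> ?B \<and> contract x (bdry (V - {x}) c) = 0"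
        using c chains_mono[of "V - {x}" V K E "Suc j"] contract_bdry_del by auto
    qed
    show "ks.finite_dim {y\<in>?B. contract x y = 0}" by (rule ks.finite_dim_subset[OF _ fd]) blast
  qed
  moreover have "ks.dim (bdry (V - closed_nbhd E x) ` chains K (V - closed_nbhd E x) E j)
      \<le> ks.dim (contract x ` ?B)"
  proof (rule ks.dim_subset_finite_dim)
    show "bdry (V - closed_nbhd E x) ` chains K (V - closed_nbhd E x) E j \<subseteq> contract x ` ?B"
    proof clarify
      fix d assume d: "d \<in> chains K (V - closed_nbhd E x) E j"
      have md: "- d \<in> chains K (V - closed_nbhd E x) E j"
        using ks.subspace_neg[OF chains_subspace d] .
      have "bdry (V - closed_nbhd E x) d = contract x (bdry V (cone x (- d)))"
        using contract_bdry_cone_link[OF md] by (simp add: module_hom.neg[OF bdry_linear])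
      thus "bdry (V - closed_nbhd E x) d \<in> contract x ` ?B"
        using cone_link_in_chains[OF md] by blast
    qed
    show "ks.finite_dim (contract x ` ?B)" by (rule ks.finite_dim_image[OF fd contract_linear])
  qed
  ultimately show ?thesis by linarith
qed

lemma dim_chains_le_del_link:
  "ks.dim (chains K V E (Suc j))
   \<le> ks.dim (chains K (V - {x}) E (Suc j)) + ks.dim (chains K (V - closed_nbhd E x) E j)"
proof -
  let ?A = "chains K (V - {x}) E (Suc j)" and ?D = "chains K (V - closed_nbhd E x) E j"
  interpret cone: module_hom kscale kscale "cone x :: _ \<Rightarrow> _ \<Rightarrow> 'k" by (rule cone_linear)
  obtain BA where BA: "BA \<subseteq> ?A" "ks.independent BA" "?A \<subseteq> ks.span BA" "card BA = ks.dim ?A" "finite BA"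
    by (rule ks.finite_dim_obtain_basis[OF chains_finite_dim[OF finite_Diff[OF finV]]])
  obtain BD where BD: "BD \<subseteq> ?D" "ks.independent BD" "?D \<subseteq> ks.span BD" "card BD = ks.dim ?D" "finite BD"
    by (rule ks.finite_dim_obtain_basis[OF chains_finite_dim[OF finite_Diff[OF finV]]])
  have "chains K V E (Suc j) \<subseteq> ks.span (BA \<union> cone x ` BD)"
  proof
    fix c assume c: "c \<in> chains K V E (Suc j)"
    define r where "r = (\<lambda>\<sigma>. if x \<in> \<sigma> then 0 else c \<sigma>)"
    have "c = r + cone x (contract x c)" by (auto simp: fun_eq_iff r_def cone_contract)
    moreover have "r \<in> ks.span (BA \<union> cone x ` BD)"
    proof -
      have "r \<in> ?A" using c by (auto simp: r_def chains_def ind_face_def)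
      thus ?thesis using BA(3) ks.span_mono[of BA "BA \<union> cone x ` BD"] by blast
    qed
    moreover have "cone x (contract x c) \<in> ks.span (BA \<union> cone x ` BD)"
    proof -
      have "contract x c \<in> ks.span BD" using contract_in_link_chains[OF c] BD(3) by blast
      hence "cone x (contract x c) \<in> ks.span (cone x ` BD)" using cone.span_image by blast
      thus ?thesis using ks.span_mono[of "cone x ` BD" "BA \<union> cone x ` BD"] by blast
    qed
    ultimately show "c \<in> ks.span (BA \<union> cone x ` BD)" by (metis ks.span_add)
  qed
  hence "ks.dim (chains K V E (Suc j)) \<le> card (BA \<union> cone x ` BD)"
    using ks.dim_le_card BA(5) BD(5) by blast
  also have "\<dots> \<le> card BA + card BD"
    using card_Un_le[of BA "cone x ` BD"] card_image_le[OF BD(5), of "cone x"] by linarith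
  finally show ?thesis using BA(4) BD(4) by simp
qed

lemma red_betti_0_le_del: "red_betti K V E 0 \<le> red_betti K (V - {x}) E 0"
proof -
  have chains_0_del: "chains K (V - {x}) E 0 = chains K V E 0"
    unfolding chains_0[OF finV] chains_0[OF finite_Diff[OF finV]] ..
  have "bdry V c = bdry (V - {x}) c" if "c \<in> chains K V E 0" for c
    by (rule bdry_eq_if_support_subset[OF finV]) (use that in \<open>auto simp: chains_0[OF finV]\<close>)
  hence "bdry V ` chains K V E 0 = bdry (V - {x}) ` chains K (V - {x}) E 0"
    unfolding chains_0_del by (rule image_cong[OF refl])
  moreover have "ks.dim (bdry (V - {x}) ` chains K (V - {x}) E (Suc 0)) \<le> ks.dim (bdry V ` chains K V E (Suc 0))"
    using dim_boundaries_ge_del_link[of 0] by simp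
  ultimately show ?thesis
    unfolding red_betti_eq_rank[OF finV] red_betti_eq_rank[OF finite_Diff[OF finV]] chains_0_del by simp
qed

lemma red_betti_Suc_le_del_link:
  "red_betti K V E (Suc j) \<le> red_betti K (V - {x}) E (Suc j) + red_betti K (V - closed_nbhd E x) E j"
  using dim_chains_le_del_link[of j] dim_boundaries_ge_del_link[of j] dim_boundaries_ge_del_link[of "Suc j"]
  unfolding red_betti_eq_rank[OF finV] red_betti_eq_rank[OF finite_Diff[OF finV]]
  by linarith

end

lemma total_betti_le_del_link:
  fixes K :: "'k::field itself" and V :: "'a::linorder set"
  assumes finV: "finite V" and xV: "x \<in> V"
    and sym: "\<And>a b. E a b \<Longrightarrow> E b a" and irr: "\<And>a. \<not> E a a"
  shows "total_betti K V E \<le> total_betti K (V - {x}) E + total_betti K (V - closed_nbhd E x) E"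
proof -
  let ?D = "V - {x}" and ?L = "V - closed_nbhd E x" and ?n = "card V"
  have "total_betti K V E = (\<Sum>j<Suc ?n. red_betti K V E j)"
    by (rule total_betti_eq_sum_lessThan[OF finV]) simp
  also have "\<dots> = red_betti K V E 0 + (\<Sum>j<?n. red_betti K V E (Suc j))"
    by (simp only: sum.lessThan_Suc_shift)
  also have "\<dots> \<le> red_betti K ?D E 0 + (\<Sum>j<?n. red_betti K ?D E (Suc j) + red_betti K ?L E j)"
  proof (intro add_mono sum_mono)
    show "red_betti K V E 0 \<le> red_betti K ?D E 0" by (rule red_betti_0_le_del[OF finV xV sym irr])
    show "red_betti K V E (Suc j) \<le> red_betti K ?D E (Suc j) + red_betti K ?L E j" for j
      by (rule red_betti_Suc_le_del_link[OF finV xV sym irr])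
  qed
  also have "\<dots> = (\<Sum>j<Suc ?n. red_betti K ?D E j) + (\<Sum>j<?n. red_betti K ?L E j)"
    by (simp only: sum.distrib sum.lessThan_Suc_shift add.assoc)
  also have "\<dots> = total_betti K ?D E + total_betti K ?L E"
  proof -
    have "card ?D < Suc ?n" by (simp add: card_Diff1_le le_imp_less_Suc)
    moreover have "card ?L < ?n" using finV xV by (intro psubset_card_mono) auto
    ultimately show ?thesis using finV by (simp add: total_betti_eq_sum_lessThan)
  qed
  finally show ?thesis .
qed

lemma total_betti_eq_0_if_isolated:
  fixes K :: "'k::field itself" and V :: "'a::linorder set"
  assumes finV: "finite V" and xV: "x \<in> V" and isolated: "\<And>y. y \<in> V \<Longrightarrow> \<not> E x y"
    and sym: "\<And>a b. E a b \<Longrightarrow> E b a" and irr: "\<And>a. \<not> E a a"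
  shows "total_betti K V E = 0"
proof -
  have "red_betti K V E j = 0" for j
  proof -
    let ?Z = "{c \<in> chains K V E j. bdry V c = 0}" and ?B = "bdry V ` chains K V E (Suc j)"
    \<comment> \<open>\<open>x\<close> is a cone point of \<open>Ind(G)\<close>, so every cycle \<open>z\<close> bounds the cone over it\<close>
    have "?Z \<subseteq> ?B"
    proof
      fix z assume z: "z \<in> ?Z"
      hence zc: "z \<in> chains K V E j" by simp
      have supp: "\<sigma> \<subseteq> V" if "z \<sigma> \<noteq> 0" for \<sigma> using chains_support_subset[OF zc that] .
      have "bdry V (cone x z) + cone x (bdry V z) = z"
        by (rule bdry_cone_add_cone_bdry[OF finV xV]) (metis finite_subset supp finV)
      moreover have "cone x z \<in> chains K V E (Suc j)"
      proof (rule cone_in_chains[OF finV xV zc sym irr])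
        fix \<sigma> y assume "z \<sigma> \<noteq> 0" "y \<in> \<sigma>"
        thus "\<not> E x y" using isolated supp by blast
      qed
      moreover have "cone x (bdry V z) = 0" using z by (simp add: cone_def fun_eq_iff)
      ultimately show "z \<in> ?B" by (metis add.right_neutral image_eqI)
    qed
    hence "ks.dim ?Z \<le> ks.dim ?B" by (rule ks.dim_subset_finite_dim[OF _ boundaries_finite_dim[OF finV]])
    thus ?thesis unfolding red_betti_def by simp
  qed
  thus ?thesis unfolding total_betti_def by simp
qed

lemma triangle_free_subset: "W \<subseteq> V \<Longrightarrow> triangle_free V E \<Longrightarrow> triangle_free W E"
  unfolding triangle_free_def by blast

lemma two_degenerate_subset: "W \<subseteq> V \<Longrightarrow> two_degenerate V E \<Longrightarrow> two_degenerate W E"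
  unfolding two_degenerate_def by (meson order_trans)

lemma total_betti_le_link_of_leaf_nbr:
  fixes K :: "'k::field itself" and W :: "'a::linorder set"
  assumes finW: "finite W" and sym: "\<And>a b. E a b \<Longrightarrow> E b a" and irr: "\<And>a. \<not> E a a"
    and "v \<in> W" "u \<in> W" "E v u" and leaf: "\<And>y. y \<in> W \<Longrightarrow> E v y \<Longrightarrow> y = u"
  shows "total_betti K W E \<le> total_betti K (W - closed_nbhd E u) E"
proof -
  have "total_betti K (W - {u}) E = 0"
  proof (rule total_betti_eq_0_if_isolated[where E = E, OF _ _ _ sym irr])
    show "v \<in> W - {u}" using assms(4,6) irr by auto
  qed (use finW leaf in auto)
  thus ?thesis using total_betti_le_del_link[where E = E and K = K, OF finW \<open>u \<in> W\<close> sym irr] by simp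
qed

lemma total_betti_le_two_links:
  fixes K :: "'k::field itself" and W :: "'a::linorder set"
  assumes finW: "finite W" and sym: "\<And>a b. E a b \<Longrightarrow> E b a" and irr: "\<And>a. \<not> E a a"
    and "v \<in> W" "u \<in> W" "w \<in> W" "u \<noteq> w" "E v u" "E v w"
    and nbrs: "\<And>y. y \<in> W \<Longrightarrow> E v y \<Longrightarrow> y = u \<or> y = w"
  shows "total_betti K W E
    \<le> total_betti K (W - closed_nbhd E u) E + total_betti K (W - {u} - closed_nbhd E w) E"
proof -
  have "total_betti K (W - {u} - {w}) E = 0"
  proof (rule total_betti_eq_0_if_isolated[where E = E, OF _ _ _ sym irr])
    show "v \<in> W - {u} - {w}" using assms(4,8,9) irr by auto
  qed (use finW nbrs in auto)
  hence "total_betti K (W - {u}) E \<le> total_betti K (W - {u} - closed_nbhd E w) E"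
    using total_betti_le_del_link[where V = "W - {u}" and x = w and E = E and K = K, OF _ _ sym irr] assms(6,7) finW by simp
  thus ?thesis using total_betti_le_del_link[where E = E and K = K, OF finW \<open>u \<in> W\<close> sym irr] by simp
qed

lemma card_add_card_le_if_subset_Diff:
  assumes "finite W" "S \<subseteq> W" "T \<subseteq> W - S"
  shows "card T + card S \<le> card W"
proof -
  have "card T \<le> card (W - S)" using assms by (meson card_mono finite_Diff)
  also have "\<dots> = card W - card S" using assms(1,2) by (meson card_Diff_subset finite_subset)
  finally show ?thesis using card_mono[OF assms(1,2)] by linarith
qed

text \<open>The two bounds count \<open>u, v, u'\<close> resp. \<open>u, v, w, w'\<close>, where \<open>u'\<close>, \<open>w'\<close> are neighbours
  of \<open>u\<close>, \<open>w\<close> other than \<open>v\<close>.\<close>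

lemma obtain_degree_two_vertex:
  assumes finW: "finite W" and "W \<noteq> {}" and "triangle_free W E" and "two_degenerate W E"
    and sym: "\<And>a b. E a b \<Longrightarrow> E b a" and irr: "\<And>a. \<not> E a a"
    and no_isolated: "\<And>x. x \<in> W \<Longrightarrow> \<exists>y\<in>W. E x y"
    and no_leaf: "\<And>a b. a \<in> W \<Longrightarrow> b \<in> W \<Longrightarrow> E a b \<Longrightarrow> \<exists>y\<in>W. E a y \<and> y \<noteq> b"
  obtains v u w where "v \<in> W" "u \<in> W" "w \<in> W" "u \<noteq> w" "E v u" "E v w"
    "\<And>y. y \<in> W \<Longrightarrow> E v y \<Longrightarrow> y = u \<or> y = w"
    "card (W - closed_nbhd E u) + 3 \<le> card W" "card (W - {u} - closed_nbhd E w) + 4 \<le> card W"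
proof -
  obtain v where v: "v \<in> W" "card {y\<in>W. E v y} \<le> 2"
    using assms(2,4) unfolding two_degenerate_def by blast
  obtain u where u: "u \<in> W" "E v u" using no_isolated[OF v(1)] by blast
  obtain w where w: "w \<in> W" "E v w" "w \<noteq> u" using no_leaf[OF v(1) u] by blast
  have nbrs: "y = u \<or> y = w" if "y \<in> W" "E v y" for y
  proof (rule ccontr)
    assume "\<not> (y = u \<or> y = w)"
    hence "card {u, w, y} = 3" using w by auto
    moreover have "{u, w, y} \<subseteq> {y\<in>W. E v y}" using u w that by auto
    ultimately have "3 \<le> card {y\<in>W. E v y}" using card_mono[of "{y\<in>W. E v y}" "{u, w, y}"] finW by simp
    thus False using v by simp
  qed
  have "\<not> E u w" using assms(3) v(1) u w unfolding triangle_free_def by blast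
  obtain u' where u': "u' \<in> W" "E u u'" "u' \<noteq> v" using no_leaf[OF u(1) v(1) sym[OF u(2)]] by blast
  obtain w' where w': "w' \<in> W" "E w w'" "w' \<noteq> v" using no_leaf[OF w(1) v(1) sym[OF w(2)]] by blast
  have "u \<noteq> v" "w \<noteq> v" "u' \<noteq> u" "w' \<noteq> w" using u w u' w' irr by metis+
  moreover have "w' \<noteq> u" using w'(2) \<open>\<not> E u w\<close> sym by metis
  ultimately have distinct: "card {u, v, u'} = 3" "card {u, v, w, w'} = 4"
    using u'(3) w'(3) w(3) by auto
  have "card (W - closed_nbhd E u) + card {u, v, u'} \<le> card W"
    by (rule card_add_card_le_if_subset_Diff[OF finW]) (use u v u' sym[OF u(2)] in auto)
  moreover have "card (W - {u} - closed_nbhd E w) + card {u, v, w, w'} \<le> card W"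
    by (rule card_add_card_le_if_subset_Diff[OF finW]) (use u v w w' sym[OF w(2)] in auto)
  ultimately show ?thesis using that v(1) u w nbrs distinct by simp
qed

lemma power_diff_3_add_power_diff_4:
  fixes \<Gamma> :: real
  assumes "\<Gamma> ^ 4 = \<Gamma> + 1" "4 \<le> n"
  shows "\<Gamma> ^ (n - 3) + \<Gamma> ^ (n - 4) = \<Gamma> ^ n"
proof -
  obtain m where n: "n = m + 4" using assms(2) by (metis add.commute le_add_diff_inverse)
  have "\<Gamma> ^ (n - 3) + \<Gamma> ^ (n - 4) = \<Gamma> ^ m * (\<Gamma> + 1)" by (simp add: n algebra_simps)
  also have "\<dots> = \<Gamma> ^ n" by (simp add: n power_add assms(1))
  finally show ?thesis .
qed

lemma total_betti_le_power:
  fixes K :: "'k::field itself" and E :: "'a::linorder \<Rightarrow> 'a \<Rightarrow> bool" and \<Gamma> :: real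
  assumes sym: "\<And>a b. E a b \<Longrightarrow> E b a" and irr: "\<And>a. \<not> E a a"
    and \<Gamma>: "1 \<le> \<Gamma>" "\<Gamma> ^ 4 = \<Gamma> + 1"
  shows "finite W \<Longrightarrow> triangle_free W E \<Longrightarrow> two_degenerate W E \<Longrightarrow>
         real (total_betti K W E) \<le> \<Gamma> ^ card W"
proof (induction "card W" arbitrary: W rule: less_induct)
  case less
  have IH: "real (total_betti K U E) \<le> \<Gamma> ^ m" if "U \<subseteq> W" "card U < card W" "card U \<le> m" for U m
  proof -
    have "real (total_betti K U E) \<le> \<Gamma> ^ card U"
      using less.hyps that(1,2) less.prems finite_subset triangle_free_subset two_degenerate_subset
      by metis
    also have "\<dots> \<le> \<Gamma> ^ m" using power_increasing[OF that(3) \<Gamma>(1)] .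
    finally show ?thesis .
  qed
  have smaller: "card (W - closed_nbhd E x) < card W" if "x \<in> W" for x
    using less.prems(1) that by (intro psubset_card_mono) auto
  show ?case
  proof (cases "W = {}")
    case True
    thus ?thesis using total_betti_empty_le_1[of K E] by simp
  next
    case nonempty: False
    show ?thesis
    proof (cases "\<exists>x\<in>W. \<forall>y\<in>W. \<not> E x y")
      case True
      then obtain x where "x \<in> W" "\<And>y. y \<in> W \<Longrightarrow> \<not> E x y" by blast
      thus ?thesis
        using total_betti_eq_0_if_isolated[where E = E and K = K, OF less.prems(1) _ _ sym irr] \<Gamma>(1)
        by simp
    next
      case no_isolated: False
      show ?thesis
      proof (cases "\<exists>v\<in>W. \<exists>u\<in>W. E v u \<and> (\<forall>y\<in>W. E v y \<longrightarrow> y = u)")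
        case True
        then obtain v u where vu: "v \<in> W" "u \<in> W" "E v u" "\<And>y. y \<in> W \<Longrightarrow> E v y \<Longrightarrow> y = u" by blast
        have "total_betti K W E \<le> total_betti K (W - closed_nbhd E u) E"
          by (rule total_betti_le_link_of_leaf_nbr[where E = E, OF less.prems(1) sym irr vu])
        also have "real \<dots> \<le> \<Gamma> ^ card W"
          using IH smaller[OF vu(2)] by (simp add: less_imp_le)
        finally show ?thesis by simp
      next
        case False
        then obtain v u w where vuw: "v \<in> W" "u \<in> W" "w \<in> W" "u \<noteq> w" "E v u" "E v w"
          "\<And>y. y \<in> W \<Longrightarrow> E v y \<Longrightarrow> y = u \<or> y = w"
          and card_link_u: "card (W - closed_nbhd E u) + 3 \<le> card W"
          and card_link_w: "card (W - {u} - closed_nbhd E w) + 4 \<le> card W"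
          using obtain_degree_two_vertex[OF less.prems(1) nonempty less.prems(2,3) sym irr] no_isolated
          by blast
        have "real (total_betti K W E)
            \<le> real (total_betti K (W - closed_nbhd E u) E) + real (total_betti K (W - {u} - closed_nbhd E w) E)"
          using total_betti_le_two_links[where E = E and K = K, OF less.prems(1) sym irr vuw] by linarith
        also have "\<dots> \<le> \<Gamma> ^ (card W - 3) + \<Gamma> ^ (card W - 4)"
          by (intro add_mono IH) (use card_link_u card_link_w in auto)
        also have "\<dots> = \<Gamma> ^ card W"
          using power_diff_3_add_power_diff_4[OF \<Gamma>(2)] card_link_w by simp
        finally show ?thesis .
      qed
    qed
  qed
qed

theorem proposition6p4:
  fixes V :: "'a::linorder set" and E :: "'a \<Rightarrow> 'a \<Rightarrow> bool" and \<Gamma> :: real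
  assumes "finite V" and "V \<noteq> {}"
    and "\<And>x y. E x y \<Longrightarrow> E y x" and "\<And>x. \<not> E x x"
    and "triangle_free V E" and "two_degenerate V E"
    and "1 \<le> \<Gamma>" and "\<Gamma> \<le> 2" and "\<Gamma> ^ 4 - \<Gamma> - 1 = 0"
  shows "root (card V) (real (total_betti TYPE('k::field) V E)) \<le> \<Gamma>"
proof -
  have n: "0 < card V" using assms(1,2) by (simp add: card_gt_0_iff)
  have \<Gamma>4: "\<Gamma> ^ 4 = \<Gamma> + 1" using assms(9) by simp
  have "real (total_betti TYPE('k) V E) \<le> \<Gamma> ^ card V"
    by (rule total_betti_le_power[OF assms(3,4,7) \<Gamma>4 assms(1,5,6)])
  hence "root (card V) (real (total_betti TYPE('k) V E)) \<le> root (card V) (\<Gamma> ^ card V)"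
    using n by simp
  also have "\<dots> = \<Gamma>" using n assms(7) by (simp add: real_root_power_cancel)
  finally show ?thesis .
qed

end
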